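(* Let $\{q_k:k\ge0\}$ be a non-decreasing sequence of nonnegative numbers with $q_0>0$ satisfying $\frac{q_{n-1}}{Q_n}=O(1/n)$ as $n\to\infty$. Then there is a constant $c>0$ such that for all $n\in\mathbb N_+$ and all $x\in G_m$, $$|F_n(x)|\le \frac{c}{n}\sum_{j=0}^{|n|}M_j\,|K_{M_j}(x)|.$$
   Context: Let $m=(m_0,m_1,\dots)$ be a bounded sequence of integers $m_k\ge 2$; $G_m=\prod_k Z_{m_k}$ with Haar probability measure $\mu$; $M_0=1$, $M_{k+1}=m_kM_k$, $n=\sum_j n_jM_j$ with $n_j\in Z_{m_j}$. $r_k(x)=\exp(2\pi i x_k/m_k)$, $\psi_n=\prod_k r_k^{n_k}$, $D_n=\sum_{k=0}^{n-1}\psi_k$. The Fejér kernel is $K_n=\frac1n\sum_{k=1}^nD_k$. $Q_n=\sum_{k=0}^{n-1}q_k$ and the Nörlund kernel is $F_n=\frac1{Q_n}\sum_{k=1}^nq_{n-k}D_k$. For $n\in\mathbb N_+$, $|n|$ denotes the unique integer with $M_{|n|}\le n<M_{|n|+1}$. *)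

theory Defs
  imports Complex_Main "HOL-Library.Landau_Symbols"
begin

definition Gm :: "(nat \<Rightarrow> nat) \<Rightarrow> (nat \<Rightarrow> nat) set" where
  "Gm m = {x. \<forall>k. x k < m k}"

definition Mseq :: "(nat \<Rightarrow> nat) \<Rightarrow> nat \<Rightarrow> nat" where
  "Mseq m k = (\<Prod>i<k. m i)"

definition digit :: "(nat \<Rightarrow> nat) \<Rightarrow> nat \<Rightarrow> nat \<Rightarrow> nat" where
  "digit m n j = (n div Mseq m j) mod m j"

definition rfun :: "(nat \<Rightarrow> nat) \<Rightarrow> nat \<Rightarrow> (nat \<Rightarrow> nat) \<Rightarrow> complex" where
  "rfun m k x = exp (2 * pi * \<i> * of_nat (x k) / of_nat (m k))"

text \<open>Vilenkin function psi_n = prod_k r_k^(n_k); digits n_k vanish for k > n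
  since M_k >= 2^k > k, so the product over k <= n is the full product.\<close>
definition psi :: "(nat \<Rightarrow> nat) \<Rightarrow> nat \<Rightarrow> (nat \<Rightarrow> nat) \<Rightarrow> complex" where
  "psi m n x = (\<Prod>k\<le>n. rfun m k x ^ digit m n k)"

definition Dir :: "(nat \<Rightarrow> nat) \<Rightarrow> nat \<Rightarrow> (nat \<Rightarrow> nat) \<Rightarrow> complex" where
  "Dir m n x = (\<Sum>k<n. psi m k x)"

definition Fejer :: "(nat \<Rightarrow> nat) \<Rightarrow> nat \<Rightarrow> (nat \<Rightarrow> nat) \<Rightarrow> complex" where
  "Fejer m n x = (1 / of_nat n) * (\<Sum>k=1..n. Dir m k x)"

definition Qsum :: "(nat \<Rightarrow> real) \<Rightarrow> nat \<Rightarrow> real" where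
  "Qsum q n = (\<Sum>k<n. q k)"

definition Norlund :: "(nat \<Rightarrow> nat) \<Rightarrow> (nat \<Rightarrow> real) \<Rightarrow> nat \<Rightarrow> (nat \<Rightarrow> nat) \<Rightarrow> complex" where
  "Norlund m q n x = (1 / of_real (Qsum q n)) * (\<Sum>k=1..n. of_real (q (n - k)) * Dir m k x)"

definition nlev :: "(nat \<Rightarrow> nat) \<Rightarrow> nat \<Rightarrow> nat" where
  "nlev m n = (THE s. Mseq m s \<le> n \<and> n < Mseq m (Suc s))"

end

theory Submission
  imports Defs "HOL-Analysis.Analysis"
begin

text \<open>Summation by parts with the non-increasing weights $q_{n-k}$ gives
  $|F_n| \le \frac{q_{n-1}}{Q_n}\max_{1\le k\le n}|S_k|$, where $S_k = D_1 + \dots + D_k = k K_k$,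
  and the hypothesis on $q$ makes $q_{n-1}/Q_n = O(1/n)$. It remains to bound $|S_k|$ by a constant
  times $\sum_{j\le|k|}|S_{M_j}|$. Write $k = a M_s + b$ with $s = |k|$, $a < m_s$ and $b < M_s$.
  Since $\psi_{a M_s + i} = r_s^a \psi_i$ for $i < M_s$, the sum $S_k$ splits into the $a$ full blocks,
  each controlled by $|S_{M_s}|$ and $M_s |D_{M_s}| \le 2 |S_{M_s}|$ ($D_{M_s}$ is $M_s$ times the
  indicator of $x_0 = \dots = x_{s-1} = 0$), and a twisted copy of $S_b$, which is handled by
  induction. Boundedness of $m$ keeps $a$, and hence the constant, bounded.\<close>

definition Dir_sum :: "(nat \<Rightarrow> nat) \<Rightarrow> nat \<Rightarrow> (nat \<Rightarrow> nat) \<Rightarrow> complex" where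
  "Dir_sum m n x = (\<Sum>k=1..n. Dir m k x)"

lemma Dir_sum_0 [simp]: "Dir_sum m 0 x = 0"
  by (simp add: Dir_sum_def)

lemma Dir_sum_Suc: "Dir_sum m (Suc n) x = Dir_sum m n x + Dir m (Suc n) x"
  by (simp add: Dir_sum_def)

lemma norm_Dir_sum_eq_Fejer: "0 < n \<Longrightarrow> norm (Dir_sum m n x) = real n * cmod (Fejer m n x)"
  by (simp add: Fejer_def Dir_sum_def norm_mult norm_divide)

lemma Mseq_0 [simp]: "Mseq m 0 = 1"
  by (simp add: Mseq_def)

lemma Mseq_Suc: "Mseq m (Suc k) = m k * Mseq m k"
  by (simp add: Mseq_def)

lemma Mseq_dvd: "k \<le> s \<Longrightarrow> Mseq m k dvd Mseq m s"
  unfolding Mseq_def by (rule prod_dvd_prod_subset) auto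

lemma digit_eq_0: "n < Mseq m k \<Longrightarrow> digit m n k = 0"
  by (simp add: digit_def)

lemma norm_rfun [simp]: "norm (rfun m k x) = 1"
  by (simp add: rfun_def)

subsection \<open>Summation by parts\<close>

lemma sum_by_parts:
  fixes w :: "nat \<Rightarrow> real" and d :: "nat \<Rightarrow> 'a::real_vector"
  shows "(\<Sum>k=1..n. w k *\<^sub>R d k)
           = w n *\<^sub>R (\<Sum>i=1..n. d i) + (\<Sum>k=1..<n. (w k - w (Suc k)) *\<^sub>R (\<Sum>i=1..k. d i))"
proof (induction n)
  case (Suc n)
  show ?case
  proof (cases "n = 0")
    case False
    then have "{1..<Suc n} = insert n {1..<n}" by auto
    then show ?thesis using Suc by (simp add: algebra_simps)
  qed simp
qed simp

lemma abel_inequality: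
  fixes w :: "nat \<Rightarrow> real" and d :: "nat \<Rightarrow> 'a::real_normed_vector"
  assumes "1 \<le> n"
    and w_decr: "\<And>k. k \<in> {1..<n} \<Longrightarrow> w (Suc k) \<le> w k" and w_nonneg: "0 \<le> w n"
    and partial_le: "\<And>k. k \<in> {1..n} \<Longrightarrow> norm (\<Sum>i=1..k. d i) \<le> A"
  shows "norm (\<Sum>k=1..n. w k *\<^sub>R d k) \<le> w 1 * A"
proof -
  have "norm (\<Sum>k=1..n. w k *\<^sub>R d k)
          \<le> w n * norm (\<Sum>i=1..n. d i) + (\<Sum>k=1..<n. (w k - w (Suc k)) * norm (\<Sum>i=1..k. d i))"
    unfolding sum_by_parts
    using w_nonneg w_decr
    by (intro order_trans [OF norm_triangle_ineq] add_mono order_trans [OF norm_sum] sum_mono) auto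
  also have "\<dots> \<le> w n * A + (\<Sum>k=1..<n. (w k - w (Suc k)) * A)"
    using assms by (intro add_mono mult_left_mono sum_mono) auto
  also have "(\<Sum>k=1..<n. (w k - w (Suc k)) * A) = (w 1 - w n) * A"
    using sum_Suc_diff' [of 1 n "\<lambda>k. - w k"] \<open>1 \<le> n\<close> by (simp add: sum_distrib_right [symmetric])
  finally show ?thesis by (simp add: algebra_simps)
qed

lemma norm_Norlund_le:
  fixes q :: "nat \<Rightarrow> real"
  assumes "mono q" "\<And>k. 0 \<le> q k" "1 \<le> n"
    and "\<And>k. k \<in> {1..n} \<Longrightarrow> norm (Dir_sum m k x) \<le> A"
  shows "cmod (Norlund m q n x) \<le> q (n - 1) / Qsum q n * A"
proof -
  have "norm (\<Sum>k=1..n. q (n - k) *\<^sub>R Dir m k x) \<le> q (n - 1) * A"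
    using assms unfolding Dir_sum_def
    by (intro abel_inequality) (auto intro: monoD)
  moreover have "0 \<le> Qsum q n"
    unfolding Qsum_def using assms(2) by (rule sum_nonneg)
  ultimately show ?thesis
    by (simp add: Norlund_def norm_mult norm_divide scaleR_conv_of_real divide_right_mono)
qed

lemma bigo_inverse_imp_bounded:
  fixes f :: "nat \<Rightarrow> real"
  assumes "f \<in> O[sequentially](\<lambda>n. 1 / real n)"
  obtains K where "0 < K" "\<And>n. 1 \<le> n \<Longrightarrow> real n * \<bar>f n\<bar> \<le> K"
proof -
  obtain c where "eventually (\<lambda>n. norm (f n) \<le> c * norm (1 / real n)) sequentially"
    using assms by (elim landau_o.bigE)
  then have "eventually (\<lambda>n. norm (real n * f n) \<le> norm c) sequentially"
    using eventually_gt_at_top [of 0]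
    by eventually_elim (auto simp: abs_mult field_simps intro: order_trans [OF _ abs_ge_self])
  then have "Bseq (\<lambda>n. real n * f n)"
    by (rule Bseq_eventually_mono) simp
  then obtain K where "0 < K" "\<And>n. \<bar>real n * f n\<bar> \<le> K"
    by (auto elim: BseqE)
  then show ?thesis by (intro that) (auto simp: abs_mult)
qed

subsection \<open>Blocks of the Vilenkin system\<close>

locale vilenkin_system =
  fixes m :: "nat \<Rightarrow> nat"
  assumes m_ge2: "\<And>k. 2 \<le> m k"
begin

lemma Mseq_pos: "0 < Mseq m k"
proof -
  have "0 < m i" for i using m_ge2 [of i] by simp
  then show ?thesis unfolding Mseq_def by (simp add: prod_pos)
qed

lemma Mseq_strict_mono: "strict_mono (Mseq m)"
proof (rule strict_mono_Suc_iff [THEN iffD2], intro allI)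
  fix k
  show "Mseq m k < Mseq m (Suc k)"
    using m_ge2 [of k] Mseq_pos [of k] by (simp add: Mseq_Suc)
qed

lemma Mseq_gt: "k < Mseq m k"
proof (induction k)
  case (Suc k)
  then show ?case using strict_monoD [OF Mseq_strict_mono, of k "Suc k"] by simp
qed (simp add: Mseq_pos)

lemma psi_eq_prod:
  assumes "n < Mseq m N"
  shows "psi m n x = (\<Prod>k<N. rfun m k x ^ digit m n k)"
proof -
  have trivial: "rfun m k x ^ digit m n k = 1" if "N \<le> k \<or> n < k" for k
  proof -
    have "n < Mseq m k"
      using that assms Mseq_gt [of k] strict_mono_less_eq [OF Mseq_strict_mono, of N k] by auto
    then show ?thesis by (simp add: digit_eq_0)
  qed
  have "psi m n x = (\<Prod>k<max N (Suc n). rfun m k x ^ digit m n k)"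
    unfolding psi_def using trivial by (intro prod.mono_neutral_left) auto
  also have "\<dots> = (\<Prod>k<N. rfun m k x ^ digit m n k)"
    using trivial by (intro prod.mono_neutral_right) auto
  finally show ?thesis .
qed

lemma digit_add_mult_Mseq:
  assumes "i < Mseq m s" "a < m s"
  shows "digit m (a * Mseq m s + i) k = (if k < s then digit m i k else if k = s then a else 0)"
proof -
  consider "k < s" | "k = s" | "s < k" by linarith
  then show ?thesis
  proof cases
    case 1
    obtain P where "Mseq m s = m k * Mseq m k * P"
      using Mseq_dvd [of "Suc k" s m] 1 by (auto simp: Mseq_Suc elim!: dvdE)
    then have eq: "a * Mseq m s + i = i + Mseq m k * (m k * (a * P))"
      by (simp add: ac_simps)
    have "(a * Mseq m s + i) div Mseq m k = i div Mseq m k + m k * (a * P)"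
      unfolding eq using Mseq_pos [of k] by simp
    then show ?thesis using 1 by (simp add: digit_def)
  next
    case 2
    then show ?thesis using assms Mseq_pos [of s] by (simp add: digit_def)
  next
    case 3
    have "a * Mseq m s + i < Mseq m (Suc s)"
      using assms mult_right_mono [of "Suc a" "m s" "Mseq m s"] by (simp add: Mseq_Suc)
    also have "\<dots> \<le> Mseq m k"
      using 3 by (simp add: strict_mono_less_eq [OF Mseq_strict_mono])
    finally show ?thesis using 3 by (simp add: digit_eq_0)
  qed
qed

lemma psi_add_mult_Mseq:
  assumes "i < Mseq m s" "a < m s"
  shows "psi m (a * Mseq m s + i) x = rfun m s x ^ a * psi m i x"
proof -
  have "a * Mseq m s + i < Mseq m (Suc s)"
    using assms mult_right_mono [of "Suc a" "m s" "Mseq m s"] by (simp add: Mseq_Suc)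
  then have "psi m (a * Mseq m s + i) x = (\<Prod>k<Suc s. rfun m k x ^ digit m (a * Mseq m s + i) k)"
    by (rule psi_eq_prod)
  also have "\<dots> = (\<Prod>k<s. rfun m k x ^ digit m i k) * rfun m s x ^ a"
    using assms by (simp add: digit_add_mult_Mseq)
  finally show ?thesis
    using psi_eq_prod [OF assms(1)] by simp
qed

lemma Dir_add_mult_Mseq:
  assumes "a < m s" "k \<le> Mseq m s"
  shows "Dir m (a * Mseq m s + k) x = Dir m (a * Mseq m s) x + rfun m s x ^ a * Dir m k x"
  using assms(2)
proof (induction k)
  case (Suc k)
  then show ?case
    using psi_add_mult_Mseq [OF _ assms(1), of k x] by (simp add: Dir_def algebra_simps)
qed (simp add: Dir_def)

lemma Dir_mult_Mseq:
  assumes "a \<le> m s"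
  shows "Dir m (a * Mseq m s) x = Dir m (Mseq m s) x * (\<Sum>t<a. rfun m s x ^ t)"
  using assms
proof (induction a)
  case (Suc a)
  then show ?case
    using Dir_add_mult_Mseq [of a s "Mseq m s" x] by (simp add: add.commute algebra_simps)
qed (simp add: Dir_def)

lemma sum_rfun_powers:
  assumes "x \<in> Gm m"
  shows "(\<Sum>t<m s. rfun m s x ^ t) = (if x s = 0 then of_nat (m s) else 0)"
proof (cases "x s = 0")
  case False
  have xs: "0 < x s" "x s < m s" using False assms by (auto simp: Gm_def)
  have "rfun m s x ^ m s = exp (of_nat (x s) * (2 * pi * \<i>))"
    unfolding rfun_def exp_of_nat_mult [symmetric] using xs by (simp add: field_simps)
  then have root: "rfun m s x ^ m s = 1"
    by (simp add: exp_of_nat_mult)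
  have "rfun m s x \<noteq> 1"
  proof
    assume "rfun m s x = 1"
    then obtain n :: int where "2 * pi * real (x s) / real (m s) = of_int (2 * n) * pi"
      unfolding rfun_def exp_eq_1 by auto
    then have "real (x s) / real (m s) = of_int n"
      using xs by (simp add: field_simps)
    moreover have "0 < real (x s) / real (m s)" "real (x s) / real (m s) < 1"
      using xs by auto
    ultimately show False by simp
  qed
  then show ?thesis using False root by (simp add: sum_gp_strict)
qed (simp add: rfun_def)

lemma Dir_Mseq:
  assumes "x \<in> Gm m"
  shows "Dir m (Mseq m s) x = (if \<forall>j<s. x j = 0 then of_nat (Mseq m s) else 0)"
proof (induction s)
  case (Suc s)
  have "Dir m (Mseq m (Suc s)) x = Dir m (Mseq m s) x * (\<Sum>t<m s. rfun m s x ^ t)"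
    by (simp add: Mseq_Suc Dir_mult_Mseq)
  then show ?case
    using Suc sum_rfun_powers [OF assms, of s] by (auto simp: Mseq_Suc less_Suc_eq)
qed (simp add: Dir_def psi_def digit_def)

lemma Dir_below_Mseq:
  assumes "\<forall>j<s. x j = 0" "k \<le> Mseq m s"
  shows "Dir m k x = of_nat k"
proof -
  have "psi m i x = 1" if "i < Mseq m s" for i
    using psi_eq_prod [OF that] assms(1) by (simp add: rfun_def)
  then show ?thesis
    using assms(2) unfolding Dir_def by (simp add: sum.neutral)
qed

lemma norm_Dir_Mseq_le:
  assumes "x \<in> Gm m"
  shows "real (Mseq m s) * norm (Dir m (Mseq m s) x) \<le> 2 * norm (Dir_sum m (Mseq m s) x)"
proof (cases "\<forall>j<s. x j = 0")
  case True
  let ?M = "Mseq m s"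
  have "Dir_sum m k x = of_nat (\<Sum>i=1..k. i)" if "k \<le> ?M" for k
    using that Dir_below_Mseq [OF True] by (induction k) (auto simp: Dir_sum_Suc)
  moreover have "2 * (\<Sum>i=1..k. i) = k * (k + 1)" for k :: nat
    by (induction k) auto
  ultimately have "2 * norm (Dir_sum m ?M x) = real (?M * (?M + 1))"
    by (metis norm_of_nat of_nat_mult of_nat_numeral order_refl)
  then show ?thesis
    using Dir_below_Mseq [OF True order_refl] by simp
qed (use assms in \<open>auto simp: Dir_Mseq\<close>)

subsection \<open>Partial sums of Dirichlet kernels\<close>

lemma Dir_sum_add_mult_Mseq:
  assumes "a < m s" "b \<le> Mseq m s"
  shows "Dir_sum m (a * Mseq m s + b) x
           = Dir_sum m (a * Mseq m s) x + of_nat b * Dir m (a * Mseq m s) x + rfun m s x ^ a * Dir_sum m b x"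
  using assms(2)
proof (induction b)
  case (Suc b)
  then show ?case
    using Dir_add_mult_Mseq [OF assms(1), of "Suc b" x] by (simp add: Dir_sum_Suc algebra_simps)
qed simp

lemma norm_Dir_sum_add_mult_Mseq_le:
  assumes "a < m s" "b \<le> Mseq m s"
  shows "norm (Dir_sum m (a * Mseq m s + b) x)
           \<le> norm (Dir_sum m (a * Mseq m s) x) + b * norm (Dir m (a * Mseq m s) x) + norm (Dir_sum m b x)"
proof -
  have "norm (u + v + w) \<le> norm u + norm v + norm w" for u v w :: complex
    using norm_triangle_ineq [of "u + v" w] norm_triangle_ineq [of u v] by linarith
  then show ?thesis
    unfolding Dir_sum_add_mult_Mseq [OF assms]
    by (rule order_trans) (simp add: norm_mult norm_power)
qed

lemma norm_Dir_mult_Mseq_le: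
  assumes "a \<le> m s"
  shows "norm (Dir m (a * Mseq m s) x) \<le> a * norm (Dir m (Mseq m s) x)"
proof -
  have "norm (\<Sum>t<a. rfun m s x ^ t) \<le> a"
    using norm_sum [of "\<lambda>t. rfun m s x ^ t" "{..<a}"] by (simp add: norm_power)
  from mult_left_mono [OF this norm_ge_zero [of "Dir m (Mseq m s) x"]] show ?thesis
    unfolding Dir_mult_Mseq [OF assms] norm_mult by (simp add: mult.commute)
qed

lemma norm_Dir_sum_mult_Mseq_le:
  assumes "a \<le> m s"
  shows "norm (Dir_sum m (a * Mseq m s) x)
           \<le> a * norm (Dir_sum m (Mseq m s) x) + a * a * Mseq m s * norm (Dir m (Mseq m s) x)"
  using assms
proof (induction a)
  case (Suc a)
  let ?M = "Mseq m s" and ?D = "norm (Dir m (Mseq m s) x)" and ?S = "norm (Dir_sum m (Mseq m s) x)"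
  have "norm (Dir_sum m (Suc a * ?M) x)
          \<le> norm (Dir_sum m (a * ?M) x) + ?M * norm (Dir m (a * ?M) x) + ?S"
    using norm_Dir_sum_add_mult_Mseq_le [of a s ?M x] Suc.prems by (simp add: add.commute)
  also have "\<dots> \<le> (a * ?S + a * a * ?M * ?D) + ?M * (a * ?D) + ?S"
    using Suc norm_Dir_mult_Mseq_le [of a s x] by (intro add_mono mult_left_mono) auto
  also have "\<dots> \<le> Suc a * ?S + Suc a * Suc a * ?M * ?D"
    by (simp add: algebra_simps)
  finally show ?case .
qed simp

lemma nlev_eqI:
  assumes "Mseq m s \<le> n" "n < Mseq m (Suc s)"
  shows "nlev m n = s"
  unfolding nlev_def
proof (rule the_equality)
  fix s' assume "Mseq m s' \<le> n \<and> n < Mseq m (Suc s')"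
  then have "Mseq m s' < Mseq m (Suc s)" "Mseq m s < Mseq m (Suc s')"
    using assms by linarith+
  then show "s' = s"
    using strict_mono_less [OF Mseq_strict_mono] by (meson less_Suc_eq_le le_antisym)
qed (use assms in simp)

lemma nlev_bounds:
  assumes "1 \<le> n"
  shows "Mseq m (nlev m n) \<le> n" "n < Mseq m (Suc (nlev m n))"
proof -
  define t where "t = (LEAST t. n < Mseq m t)"
  have t: "n < Mseq m t"
    unfolding t_def using Mseq_gt [of n] by (rule LeastI)
  have "t \<noteq> 0"
    using t assms by (intro notI) simp
  then obtain s where s: "t = Suc s"
    using not0_implies_Suc by blast
  have s_le: "Mseq m s \<le> n"
    using not_less_Least [of s "\<lambda>t. n < Mseq m t"] s t_def by simp
  with t s have "nlev m n = s"
    by (intro nlev_eqI) auto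
  with s_le t s show "Mseq m (nlev m n) \<le> n" "n < Mseq m (Suc (nlev m n))"
    by simp_all
qed

lemma nlev_less_iff:
  assumes "1 \<le> n"
  shows "nlev m n < s \<longleftrightarrow> n < Mseq m s"
proof
  assume "nlev m n < s"
  then have "Mseq m (Suc (nlev m n)) \<le> Mseq m s"
    by (simp add: strict_mono_less_eq [OF Mseq_strict_mono])
  then show "n < Mseq m s"
    using nlev_bounds (2) [OF assms] by linarith
next
  assume "n < Mseq m s"
  then have "Mseq m (nlev m n) < Mseq m s"
    using nlev_bounds (1) [OF assms] by linarith
  then show "nlev m n < s"
    by (simp add: strict_mono_less [OF Mseq_strict_mono])
qed

lemma nlev_mono:
  assumes "1 \<le> k" "k \<le> n"
  shows "nlev m k \<le> nlev m n"
  using nlev_less_iff [OF assms(1), of "Suc (nlev m n)"] nlev_bounds (2) [of n] assms by simp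

lemma norm_Dir_sum_top_block_le:
  assumes x: "x \<in> Gm m" and B: "\<And>k. real (m k) \<le> B"
    and s: "Mseq m s \<le> n" "n < Mseq m (Suc s)"
  shows "norm (Dir_sum m n x)
           \<le> (2 * B + 3) * B * norm (Dir_sum m (Mseq m s) x) + norm (Dir_sum m (n mod Mseq m s) x)"
proof -
  let ?M = "Mseq m s" and ?D = "norm (Dir m (Mseq m s) x)" and ?S = "norm (Dir_sum m (Mseq m s) x)"
  define a where "a = n div ?M"
  define b where "b = n mod ?M"
  have n: "n = a * ?M + b" unfolding a_def b_def by (rule div_mult_mod_eq [symmetric])
  have b: "b < ?M" unfolding b_def using Mseq_pos [of s] by simp
  have a: "a < m s" unfolding a_def using s(2) by (simp add: Mseq_Suc div_less_iff_less_mult Mseq_pos)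
  have aB: "real a \<le> B" using a B [of s] by linarith
  have "norm (Dir_sum m n x) \<le> norm (Dir_sum m (a * ?M) x) + b * norm (Dir m (a * ?M) x) + norm (Dir_sum m b x)"
    unfolding n using a b by (intro norm_Dir_sum_add_mult_Mseq_le) auto
  also have "\<dots> \<le> (a * ?S + a * a * ?M * ?D) + ?M * (a * ?D) + norm (Dir_sum m b x)"
    using a b by (intro add_mono mult_mono norm_Dir_sum_mult_Mseq_le norm_Dir_mult_Mseq_le) auto
  also have "\<dots> = a * ?S + (real a * real a + real a) * (?M * ?D) + norm (Dir_sum m b x)"
    by (simp add: algebra_simps)
  also have "\<dots> \<le> B * ?S + (B * B + B) * (2 * ?S) + norm (Dir_sum m b x)"
  proof -
    have "0 \<le> B" using aB by linarith
    have "real a * real a \<le> B * B"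
      using aB by (intro mult_mono) auto
    then have "real a * real a + real a \<le> B * B + B"
      using aB by linarith
    then have "(real a * real a + real a) * (?M * ?D) \<le> (B * B + B) * (2 * ?S)"
      using \<open>0 \<le> B\<close> by (intro mult_mono [OF _ norm_Dir_Mseq_le [OF x, of s]]) auto
    then show ?thesis
      using mult_right_mono [OF aB norm_ge_zero [of "Dir_sum m ?M x"]] by linarith
  qed
  also have "\<dots> = (2 * B + 3) * B * ?S + norm (Dir_sum m (n mod ?M) x)"
    by (simp add: b_def algebra_simps)
  finally show ?thesis .
qed

lemma norm_Dir_sum_le_levels:
  assumes x: "x \<in> Gm m" and B: "\<And>k. real (m k) \<le> B"
  shows "norm (Dir_sum m n x) \<le> (2 * B + 3) * B * (\<Sum>j\<le>nlev m n. norm (Dir_sum m (Mseq m j) x))"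
proof (induction n rule: less_induct)
  case (less n)
  let ?C = "(2 * B + 3) * B" and ?S = "\<lambda>j. norm (Dir_sum m (Mseq m j) x)"
  have C: "0 \<le> ?C" using B [of 0] by simp
  show ?case
  proof (cases "n = 0")
    case False
    define s where "s = nlev m n"
    define b where "b = n mod Mseq m s"
    have s: "Mseq m s \<le> n" "n < Mseq m (Suc s)" using nlev_bounds [of n] False by (auto simp: s_def)
    have b: "b < Mseq m s" unfolding b_def using Mseq_pos [of s] by simp
    have "norm (Dir_sum m b x) \<le> ?C * (\<Sum>j<s. ?S j)"
    proof (cases "b = 0")
      case False
      have "nlev m b < s"
        using nlev_less_iff [of b s] False b by simp
      then have "(\<Sum>j\<le>nlev m b. ?S j) \<le> (\<Sum>j<s. ?S j)"
        by (intro sum_mono2) auto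
      moreover have "norm (Dir_sum m b x) \<le> ?C * (\<Sum>j\<le>nlev m b. ?S j)"
        using b s by (intro less) simp
      ultimately show ?thesis
        using C by (meson mult_left_mono order_trans)
    qed (use C in \<open>simp add: sum_nonneg\<close>)
    then show ?thesis
      using norm_Dir_sum_top_block_le [OF x B s]
      by (simp add: s_def [symmetric] b_def [symmetric] lessThan_Suc_atMost [symmetric] algebra_simps)
  qed (use C in \<open>simp add: sum_nonneg\<close>)
qed

lemma norm_Dir_sum_le_Fejer_levels:
  assumes x: "x \<in> Gm m" and B: "\<And>k. real (m k) \<le> B" and k: "1 \<le> k" "k \<le> n"
  shows "norm (Dir_sum m k x)
           \<le> (2 * B + 3) * B * (\<Sum>j\<le>nlev m n. real (Mseq m j) * cmod (Fejer m (Mseq m j) x))"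
proof -
  have "norm (Dir_sum m k x) \<le> (2 * B + 3) * B * (\<Sum>j\<le>nlev m k. norm (Dir_sum m (Mseq m j) x))"
    using x B by (rule norm_Dir_sum_le_levels)
  also have "\<dots> \<le> (2 * B + 3) * B * (\<Sum>j\<le>nlev m n. norm (Dir_sum m (Mseq m j) x))"
    using B [of 0] nlev_mono [OF k] by (intro mult_left_mono sum_mono2) auto
  also have "(\<Sum>j\<le>nlev m n. norm (Dir_sum m (Mseq m j) x))
               = (\<Sum>j\<le>nlev m n. real (Mseq m j) * cmod (Fejer m (Mseq m j) x))"
    by (intro sum.cong refl norm_Dir_sum_eq_Fejer Mseq_pos)
  finally show ?thesis .
qed

end

theorem mainTheorem4:
  fixes m :: "nat \<Rightarrow> nat" and q :: "nat \<Rightarrow> real"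
  assumes m_ge2: "\<And>k. m k \<ge> 2"
    and m_bdd: "\<exists>B. \<forall>k. m k \<le> B"
    and q_mono: "mono q"
    and q_nonneg: "\<And>k. q k \<ge> 0"
    and q0: "q 0 > 0"
    and q_O: "(\<lambda>n. q (n - 1) / Qsum q n) \<in> O[sequentially](\<lambda>n. 1 / real n)"
  shows "\<exists>c>0. \<forall>n\<ge>1. \<forall>x\<in>Gm m.
           cmod (Norlund m q n x)
             \<le> c / real n * (\<Sum>j\<le>nlev m n. real (Mseq m j) * cmod (Fejer m (Mseq m j) x))"
proof -
  interpret vilenkin_system m
    using m_ge2 by unfold_locales
  obtain B :: nat where B: "\<And>k. m k \<le> B"
    using m_bdd by blast
  define C where "C = (2 * real B + 3) * real B"
  have "0 < C"
    using B [of 0] m_ge2 [of 0] by (simp add: C_def)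
  obtain K where K: "0 < K" "\<And>n. 1 \<le> n \<Longrightarrow> real n * \<bar>q (n - 1) / Qsum q n\<bar> \<le> K"
    using bigo_inverse_imp_bounded [OF q_O] by blast
  have "cmod (Norlund m q n x)
          \<le> K * C / real n * (\<Sum>j\<le>nlev m n. real (Mseq m j) * cmod (Fejer m (Mseq m j) x))"
    if n: "1 \<le> n" and x: "x \<in> Gm m" for n x
  proof -
    let ?T = "\<Sum>j\<le>nlev m n. real (Mseq m j) * cmod (Fejer m (Mseq m j) x)"
    have "cmod (Norlund m q n x) \<le> q (n - 1) / Qsum q n * (C * ?T)"
      using norm_Dir_sum_le_Fejer_levels [OF x, of B] B n unfolding C_def
      by (intro norm_Norlund_le [OF q_mono q_nonneg n]) auto
    also have "\<dots> \<le> K / real n * (C * ?T)"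
    proof (rule mult_right_mono)
      have "0 \<le> q (n - 1) / Qsum q n"
        using q_nonneg by (simp add: Qsum_def sum_nonneg)
      then have "real n * (q (n - 1) / Qsum q n) \<le> K"
        using K(2) [OF n] by (simp only: abs_of_nonneg)
      then show "q (n - 1) / Qsum q n \<le> K / real n"
        using n by (simp add: field_simps)
      show "0 \<le> C * ?T"
        using \<open>0 < C\<close> by (simp add: sum_nonneg)
    qed
    finally show ?thesis by simp
  qed
  then show ?thesis
    using K(1) \<open>0 < C\<close> by (intro exI [of _ "K * C"]) auto
qed

end
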